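(* Let $\pi$ be a rigid $321$-avoiding permutation and $\tau$ a $321$-avoiding permutation. A rigid mapping $f:\pi\to\tau$ is an embedding of $\pi$ into $\tau$ if and only if the problem set $P(f)$ is empty.
   Context: Permutations are identified with their sets of points $(i,\sigma(i))$ with the usual left/right/above/below relations; an embedding is an injective map between point sets preserving the relative horizontal and vertical order of every pair. $x^{\leftarrow}$, $x^{\downarrow}$ denote the points immediately left of / below $x$; $\bot$ means undefined and operators applied to $\bot$ give $\bot$. In a $321$-avoiding permutation $\sigma$, $x$ is upper if some point lies right of and below it, lower if some point lies left of and above it; $U_\sigma,L_\sigma$ are these (disjoint) sets, and $\sigma$ is rigid if $\sigma=U_\sigma\cup L_\sigma$. $T(x)\in\{U,L\}$ is the type of a rigid $x$. For $b\in\{U,L\}$, $y^{\rightarrow}_b$ is the leftmost element of $b_\sigma$ strictly right of $y$ and $y^{\uparrow}_b$ the lowest element of $b_\sigma$ strictly above $y$ ($\bot$ if none). On $U_\sigma$ and on $L_\sigma$, $x\le y$ iff $x=y$ or $y$ is above and right of $x$. A rigid mapping $f:\pi\to\tau$ maps $U_\pi$ into $U_\tau$ and $L_\pi$ into $L_\tau$. A point $x$ of $\pi$ is a problem for $f$ if either $x^{\leftarrow}\neq\bot$ and ($f(x^{\leftarrow})^{\rightarrow}_{T(x)}=\bot$ or $f(x)<f(x^{\leftarrow})^{\rightarrow}_{T(x)}$), or $x^{\downarrow}\neq\bot$ and ($f(x^{\downarrow})^{\uparrow}_{T(x)}=\bot$ or $f(x)<f(x^{\downarrow})^{\uparrow}_{T(x)}$);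 i.e. $f(x)<\max\{f(x^{\leftarrow})^{\rightarrow}_{T(x)},f(x^{\downarrow})^{\uparrow}_{T(x)}\}$, where an undefined bound arising from a defined neighbour counts as exceeding every element. $P(f)$ is the set of problems for $f$. *)

theory Defs
  imports Main
begin

text \<open>A permutation of length n is a bijection of {..<n}; its points are the indices
  i < n, identified with the planar points (i, s i).  Point i is left of j iff i < j,
  and below j iff s i < s j.  Undefined (bottom) is modelled by None.\<close>

definition is_perm :: "nat \<Rightarrow> (nat \<Rightarrow> nat) \<Rightarrow> bool" where
  "is_perm n s \<longleftrightarrow> bij_betw s {..<n} {..<n}"

definition avoids321 :: "nat \<Rightarrow> (nat \<Rightarrow> nat) \<Rightarrow> bool" where
  "avoids321 n s \<longleftrightarrow> \<not> (\<exists>i j k. i < j \<and> j < k \<and> k < n \<and> s i > s j \<and> s j > s k)"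

definition upper_set :: "nat \<Rightarrow> (nat \<Rightarrow> nat) \<Rightarrow> nat set" where
  "upper_set n s = {x. x < n \<and> (\<exists>y<n. x < y \<and> s y < s x)}"

definition lower_set :: "nat \<Rightarrow> (nat \<Rightarrow> nat) \<Rightarrow> nat set" where
  "lower_set n s = {x. x < n \<and> (\<exists>y<n. y < x \<and> s x < s y)}"

definition rigid :: "nat \<Rightarrow> (nat \<Rightarrow> nat) \<Rightarrow> bool" where
  "rigid n s \<longleftrightarrow> {..<n} = upper_set n s \<union> lower_set n s"

datatype ptype = U | L

definition type_set :: "nat \<Rightarrow> (nat \<Rightarrow> nat) \<Rightarrow> ptype \<Rightarrow> nat set" where
  "type_set n s b = (case b of U \<Rightarrow> upper_set n s | L \<Rightarrow> lower_set n s)"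

definition ptype_of :: "nat \<Rightarrow> (nat \<Rightarrow> nat) \<Rightarrow> nat \<Rightarrow> ptype" where
  "ptype_of n s x = (if x \<in> upper_set n s then U else L)"

definition left_nb :: "nat \<Rightarrow> (nat \<Rightarrow> nat) \<Rightarrow> nat \<Rightarrow> nat option" where
  "left_nb n s x = (if 0 < x then Some (x - 1) else None)"

definition below_nb :: "nat \<Rightarrow> (nat \<Rightarrow> nat) \<Rightarrow> nat \<Rightarrow> nat option" where
  "below_nb n s x = (if 0 < s x then Some (inv_into {..<n} s (s x - 1)) else None)"

definition right_b :: "nat \<Rightarrow> (nat \<Rightarrow> nat) \<Rightarrow> ptype \<Rightarrow> nat \<Rightarrow> nat option" where
  "right_b n s b y = (if \<exists>z. z \<in> type_set n s b \<and> y < z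
      then Some (LEAST z. z \<in> type_set n s b \<and> y < z) else None)"

definition up_b :: "nat \<Rightarrow> (nat \<Rightarrow> nat) \<Rightarrow> ptype \<Rightarrow> nat \<Rightarrow> nat option" where
  "up_b n s b y = (if \<exists>z. z \<in> type_set n s b \<and> s y < s z
      then Some (inv_into {..<n} s (LEAST v. \<exists>z. z \<in> type_set n s b \<and> s y < s z \<and> v = s z))
      else None)"

definition plt :: "(nat \<Rightarrow> nat) \<Rightarrow> nat \<Rightarrow> nat \<Rightarrow> bool" where
  "plt s x y \<longleftrightarrow> x \<noteq> y \<and> x < y \<and> s x < s y"

definition rigid_mapping ::
  "nat \<Rightarrow> (nat \<Rightarrow> nat) \<Rightarrow> nat \<Rightarrow> (nat \<Rightarrow> nat) \<Rightarrow> (nat \<Rightarrow> nat) \<Rightarrow> bool" where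
  "rigid_mapping m p n t f \<longleftrightarrow> f ` {..<m} \<subseteq> {..<n}
     \<and> f ` upper_set m p \<subseteq> upper_set n t \<and> f ` lower_set m p \<subseteq> lower_set n t"

definition embedding ::
  "nat \<Rightarrow> (nat \<Rightarrow> nat) \<Rightarrow> nat \<Rightarrow> (nat \<Rightarrow> nat) \<Rightarrow> (nat \<Rightarrow> nat) \<Rightarrow> bool" where
  "embedding m p n t f \<longleftrightarrow> f ` {..<m} \<subseteq> {..<n} \<and> inj_on f {..<m}
     \<and> (\<forall>i<m. \<forall>j<m. (i < j \<longleftrightarrow> f i < f j) \<and> (p i < p j \<longleftrightarrow> t (f i) < t (f j)))"

definition is_problem ::
  "nat \<Rightarrow> (nat \<Rightarrow> nat) \<Rightarrow> nat \<Rightarrow> (nat \<Rightarrow> nat) \<Rightarrow> (nat \<Rightarrow> nat) \<Rightarrow> nat \<Rightarrow> bool" where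
  "is_problem m p n t f x \<longleftrightarrow>
     (case left_nb m p x of None \<Rightarrow> False
      | Some xl \<Rightarrow> (case right_b n t (ptype_of m p x) (f xl) of None \<Rightarrow> True
                    | Some z \<Rightarrow> plt t (f x) z))
   \<or> (case below_nb m p x of None \<Rightarrow> False
      | Some xd \<Rightarrow> (case up_b n t (ptype_of m p x) (f xd) of None \<Rightarrow> True
                    | Some z \<Rightarrow> plt t (f x) z))"

definition problems ::
  "nat \<Rightarrow> (nat \<Rightarrow> nat) \<Rightarrow> nat \<Rightarrow> (nat \<Rightarrow> nat) \<Rightarrow> (nat \<Rightarrow> nat) \<Rightarrow> nat set" where
  "problems m p n t f = {x. x < m \<and> is_problem m p n t f x}"

end

theory Submission
  imports Defs
begin

text \<open>In a 321-avoiding permutation the upper points, and likewise the lower points, form an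
  increasing chain. Hence for a point u of type b, the leftmost type-b point strictly right of y
  fails to lie above and right of u exactly when y is left of u, and dually for the lowest
  type-b point above y. So x is a problem for f precisely when f does not keep x to the right of
  its left neighbour or above its lower neighbour. Having no problems therefore says that f is
  strictly increasing along consecutive positions and along consecutive values of \<pi>, which by
  transitivity is the same as being an embedding.\<close>

lemma strict_mono_on_lessThan_Suc_iff:
  fixes g :: "nat \<Rightarrow> 'a::order"
  shows "strict_mono_on {..<m} g \<longleftrightarrow> (\<forall>i. Suc i < m \<longrightarrow> g i < g (Suc i))"
proof
  assume "strict_mono_on {..<m} g"
  then show "\<forall>i. Suc i < m \<longrightarrow> g i < g (Suc i)"
    by (auto intro: strict_mono_onD[of "{..<m}" g])
next
  assume step: "\<forall>i. Suc i < m \<longrightarrow> g i < g (Suc i)"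
  have "g i < g j" if "i < j" "j < m" for i j
    using that
  proof (induction j)
    case 0
    then show ?case by simp
  next
    case (Suc j)
    with step show ?case
      by (cases "i = j") (auto intro: less_trans)
  qed
  then show "strict_mono_on {..<m} g"
    by (auto intro: strict_mono_onI)
qed

lemma is_perm_inv_into:
  assumes "is_perm m p" "a < m"
  shows "inv_into {..<m} p a < m" "p (inv_into {..<m} p a) = a"
  using assms bij_betw_inv_into_right[of p "{..<m}" "{..<m}"]
    inv_into_into[of a p "{..<m}"] by (auto simp: is_perm_def bij_betw_def)

lemma is_perm_inv_into_apply:
  assumes "is_perm m p" "x < m"
  shows "p x < m" "inv_into {..<m} p (p x) = x"
  using assms by (auto simp: is_perm_def bij_betw_def inv_into_f_f)

lemma type_set_subset_lessThan: "type_set n t b \<subseteq> {..<n}"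
  by (cases b) (auto simp: type_set_def upper_set_def lower_set_def)

lemma type_set_less_iff:
  assumes perm: "is_perm n t" and avoid: "avoids321 n t"
    and "u \<in> type_set n t b" "v \<in> type_set n t b"
  shows "u < v \<longleftrightarrow> t u < t v"
proof -
  have chain: "t u < t v"
    if u: "u \<in> type_set n t b" and v: "v \<in> type_set n t b" and "u < v" for u v
  proof (rule ccontr)
    assume "\<not> t u < t v"
    moreover have "t u \<noteq> t v"
      using perm u v \<open>u < v\<close> type_set_subset_lessThan
      unfolding is_perm_def bij_betw_def inj_on_def by blast
    ultimately have descent: "t v < t u" by simp
    show False
    proof (cases b)
      case U
      then obtain w where "w < n" "v < w" "t w < t v"
        using v by (auto simp: type_set_def upper_set_def)
      then show False
        using avoid \<open>u < v\<close> descent unfolding avoids321_def by blast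
    next
      case L
      then obtain w where "w < u" "t u < t w"
        using u by (auto simp: type_set_def lower_set_def)
      moreover have "v < n"
        using v type_set_subset_lessThan by blast
      ultimately show False
        using avoid \<open>u < v\<close> descent unfolding avoids321_def by blast
    qed
  qed
  show ?thesis
    using chain[of u v] chain[of v u] assms(3,4) by (cases u v rule: linorder_cases) auto
qed

lemma rigid_mapping_in_type_set:
  assumes "rigid m p" "rigid_mapping m p n t f" "x < m"
  shows "f x \<in> type_set n t (ptype_of m p x)"
proof -
  have "x \<in> upper_set m p \<union> lower_set m p"
    using assms(1,3) unfolding rigid_def by auto
  then show ?thesis
    using assms(2) unfolding rigid_mapping_def type_set_def ptype_of_def by auto
qed

lemma right_b_problem_iff:
  assumes "is_perm n t" "avoids321 n t" and u: "u \<in> type_set n t b"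
  shows "(case right_b n t b y of None \<Rightarrow> True | Some z \<Rightarrow> plt t u z) \<longleftrightarrow> \<not> y < u"
proof (cases "\<exists>z. z \<in> type_set n t b \<and> y < z")
  case False
  then have "right_b n t b y = None"
    by (simp add: right_b_def)
  with False u show ?thesis
    by auto
next
  case True
  define z where "z = (LEAST z. z \<in> type_set n t b \<and> y < z)"
  have z: "z \<in> type_set n t b" "y < z"
    using LeastI_ex[OF True] by (simp_all add: z_def)
  have "right_b n t b y = Some z"
    using True by (simp add: right_b_def z_def)
  moreover have "z \<le> u" if "y < u"
    using u that unfolding z_def by (simp add: Least_le)
  moreover have "plt t u z \<longleftrightarrow> u < z"
    using type_set_less_iff[OF assms(1,2) u z(1)] by (auto simp: plt_def)
  ultimately show ?thesis
    using z(2) by auto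
qed

lemma up_b_problem_iff:
  assumes perm: "is_perm n t" and "avoids321 n t" and u: "u \<in> type_set n t b"
  shows "(case up_b n t b y of None \<Rightarrow> True | Some z \<Rightarrow> plt t u z) \<longleftrightarrow> \<not> t y < t u"
proof (cases "\<exists>z. z \<in> type_set n t b \<and> t y < t z")
  case False
  then have "up_b n t b y = None"
    by (simp add: up_b_def)
  with False u show ?thesis
    by auto
next
  case True
  define v where "v = (LEAST v. \<exists>z. z \<in> type_set n t b \<and> t y < t z \<and> v = t z)"
  have "\<exists>v z. z \<in> type_set n t b \<and> t y < t z \<and> v = t z"
    using True by blast
  then obtain z where z: "z \<in> type_set n t b" "t y < t z" "v = t z"
    using LeastI_ex[where P = "\<lambda>v. \<exists>z. z \<in> type_set n t b \<and> t y < t z \<and> v = t z"]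
    unfolding v_def by blast
  have "z < n"
    using z(1) type_set_subset_lessThan by blast
  then have "inv_into {..<n} t v = z"
    using perm z(3) unfolding is_perm_def bij_betw_def by (simp add: inv_into_f_f)
  then have "up_b n t b y = Some z"
    using True by (simp add: up_b_def v_def)
  moreover have "t z \<le> t u" if "t y < t u"
    using u that unfolding z(3)[symmetric] v_def by (intro Least_le) blast
  moreover have "plt t u z \<longleftrightarrow> t u < t z"
    using type_set_less_iff[OF assms(1,2) u z(1)] by (auto simp: plt_def)
  ultimately show ?thesis
    using z(2) by auto
qed

lemma is_problem_iff:
  assumes "is_perm n t" "avoids321 n t" "rigid m p" "rigid_mapping m p n t f" "x < m"
  shows "is_problem m p n t f x \<longleftrightarrow>
    (0 < x \<and> \<not> f (x - 1) < f x) \<or>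
    (0 < p x \<and> \<not> t (f (inv_into {..<m} p (p x - 1))) < t (f x))"
  using right_b_problem_iff[OF assms(1,2) rigid_mapping_in_type_set[OF assms(3-5)]]
    up_b_problem_iff[OF assms(1,2) rigid_mapping_in_type_set[OF assms(3-5)]]
  by (simp add: is_problem_def left_nb_def below_nb_def)

lemma problems_empty_iff:
  assumes "is_perm m p" "is_perm n t" "avoids321 n t" "rigid m p" "rigid_mapping m p n t f"
  shows "problems m p n t f = {} \<longleftrightarrow>
    strict_mono_on {..<m} f \<and> strict_mono_on {..<m} (t \<circ> f \<circ> inv_into {..<m} p)"
proof -
  let ?q = "inv_into {..<m} p"
  note q = is_perm_inv_into[OF assms(1)]
  note qp = is_perm_inv_into_apply[OF assms(1)]
  have "problems m p n t f = {} \<longleftrightarrow>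
      (\<forall>x<m. 0 < x \<longrightarrow> f (x - 1) < f x) \<and>
      (\<forall>x<m. 0 < p x \<longrightarrow> t (f (?q (p x - 1))) < t (f x))"
    using is_problem_iff[OF assms(2-5)] by (auto simp: problems_def)
  also have "(\<forall>x<m. 0 < x \<longrightarrow> f (x - 1) < f x) \<longleftrightarrow> (\<forall>i. Suc i < m \<longrightarrow> f i < f (Suc i))"
  proof (intro iffI allI impI)
    fix i
    assume "\<forall>x<m. 0 < x \<longrightarrow> f (x - 1) < f x" "Suc i < m"
    then show "f i < f (Suc i)"
      by (auto dest: spec[of _ "Suc i"])
  next
    fix x
    assume "\<forall>i. Suc i < m \<longrightarrow> f i < f (Suc i)" "x < m" "0 < x"
    then show "f (x - 1) < f x"
      by (auto dest: spec[of _ "x - 1"])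
  qed
  also have "(\<forall>x<m. 0 < p x \<longrightarrow> t (f (?q (p x - 1))) < t (f x)) \<longleftrightarrow>
      (\<forall>a. Suc a < m \<longrightarrow> t (f (?q a)) < t (f (?q (Suc a))))"
  proof (intro iffI allI impI)
    fix a
    assume "\<forall>x<m. 0 < p x \<longrightarrow> t (f (?q (p x - 1))) < t (f x)" "Suc a < m"
    then show "t (f (?q a)) < t (f (?q (Suc a)))"
      using q[of "Suc a"] by (auto dest: spec[of _ "?q (Suc a)"])
  next
    fix x
    assume "\<forall>a. Suc a < m \<longrightarrow> t (f (?q a)) < t (f (?q (Suc a)))" "x < m" "0 < p x"
    then show "t (f (?q (p x - 1))) < t (f x)"
      using qp[of x] by (auto dest: spec[of _ "p x - 1"])
  qed
  finally show ?thesis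
    by (simp add: strict_mono_on_lessThan_Suc_iff)
qed

lemma embedding_iff_strict_mono_on:
  assumes "is_perm m p" "f ` {..<m} \<subseteq> {..<n}"
  shows "embedding m p n t f \<longleftrightarrow>
    strict_mono_on {..<m} f \<and> strict_mono_on {..<m} (t \<circ> f \<circ> inv_into {..<m} p)"
proof -
  let ?q = "inv_into {..<m} p"
  note q = is_perm_inv_into[OF assms(1)]
  note qp = is_perm_inv_into_apply[OF assms(1)]
  show ?thesis
  proof
    assume "embedding m p n t f"
    then have pos: "i < j \<Longrightarrow> f i < f j" and val: "p i < p j \<Longrightarrow> t (f i) < t (f j)"
      if "i < m" "j < m" for i j
      using that unfolding embedding_def by blast+
    have "strict_mono_on {..<m} f"
      using pos by (intro strict_mono_onI) auto
    moreover have "strict_mono_on {..<m} (t \<circ> f \<circ> ?q)"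
    proof (rule strict_mono_onI)
      fix a b :: nat
      assume "a \<in> {..<m}" "b \<in> {..<m}" "a < b"
      then show "(t \<circ> f \<circ> ?q) a < (t \<circ> f \<circ> ?q) b"
        using val[of "?q a" "?q b"] q[of a] q[of b] by simp
    qed
    ultimately show "strict_mono_on {..<m} f \<and> strict_mono_on {..<m} (t \<circ> f \<circ> ?q)" ..
  next
    assume mono: "strict_mono_on {..<m} f \<and> strict_mono_on {..<m} (t \<circ> f \<circ> ?q)"
    have "p i < p j \<longleftrightarrow> t (f i) < t (f j)" if "i < m" "j < m" for i j
      using strict_mono_on_less[of "{..<m}" "t \<circ> f \<circ> ?q" "p i" "p j"] mono qp that by simp
    then show "embedding m p n t f"
      using assms(2) mono strict_mono_on_less strict_mono_on_imp_inj_on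
      by (fastforce simp: embedding_def)
  qed
qed

theorem corollary1:
  fixes m n :: nat and p t f :: "nat \<Rightarrow> nat"
  assumes "is_perm m p" and "avoids321 m p" and "rigid m p"
    and "is_perm n t" and "avoids321 n t"
    and "rigid_mapping m p n t f"
  shows "embedding m p n t f \<longleftrightarrow> problems m p n t f = {}"
proof -
  have "f ` {..<m} \<subseteq> {..<n}"
    using assms(6) by (simp add: rigid_mapping_def)
  then show ?thesis
    using embedding_iff_strict_mono_on[OF assms(1)] problems_empty_iff[OF assms(1,4,5,3,6)]
    by simp
qed

end
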